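(* Fix $a>0$ and put $A=4a^2$. For $w>0$ with $A/(2w)>a$, let $S_w=[-A/(2w),A/(2w)]\times[-w/2,w/2]$ be a rectangular city of area $A$ and width $w$, and let the tram line be the segment from $(-a,0)$ to $(a,0)$ (centred in the city, along its long axis). For $p=(x,y)\in\mathbb{R}^2$ let $\mathrm{Proj}(p)=(x^t,0)$ with $x^t=\max(-a,\min(x,a))$, define $$d_{\rm tr}(p_1,p_2)=d_{\rm euc}(p_1,\mathrm{Proj}(p_1))+d_{\rm euc}(\mathrm{Proj}(p_2),p_2),$$ with $d_{\rm euc}$ the Euclidean distance, and let $I(p)=\{q: d_{\rm euc}(p,q)<d_{\rm tr}(p,q)\}$. Let $$F(w)=\frac{1}{A}\iint_{S_w}\frac{\operatorname{area}(I(p)\cap S_w)}{A}\,dp$$ be the average infeasible fraction of the city. Then $\lim_{w\to 0^+}F(w)=\tfrac12$; i.e. as the rectangular city becomes arbitrarily long and narrow at constant area, its Infeasibility Factor tends to $50\%$.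
   Context: The model: a city occupies a planar region with uniform population density; a single straight tram line runs along a segment. The tram distance $d_{\rm tr}$ corresponds to the idealized case of infinite tram speed and zero waiting time: a traveller walks from the departure point to the nearest point of the tram line, rides the tram (at no cost) to the point of the line nearest the destination, and walks to the destination. A journey from $p$ to $q$ is infeasible if the direct Euclidean distance is strictly smaller than the tram distance. The Infeasibility Factor of a city $S$ is the average over $p\in S$ (with respect to area) of $100\cdot\operatorname{area}(I(p)\cap S)/\operatorname{area}(S)$. *)

theory Defs
  imports "HOL-Analysis.Analysis"
begin

definition tram_proj :: "real \<Rightarrow> real \<times> real \<Rightarrow> real \<times> real" where
  "tram_proj a p = (max (- a) (min (fst p) a), 0)"

definition d_tr :: "real \<Rightarrow> real \<times> real \<Rightarrow> real \<times> real \<Rightarrow> real" where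
  "d_tr a p1 p2 = dist p1 (tram_proj a p1) + dist (tram_proj a p2) p2"

definition infeasible_set :: "real \<Rightarrow> real \<times> real \<Rightarrow> (real \<times> real) set" where
  "infeasible_set a p = {q. dist p q < d_tr a p q}"

definition rect_city :: "real \<Rightarrow> real \<Rightarrow> (real \<times> real) set" where
  "rect_city A w = {-(A / (2 * w)) .. A / (2 * w)} \<times> {-(w / 2) .. w / 2}"

definition rect_infeas :: "real \<Rightarrow> real \<Rightarrow> real" where
  "rect_infeas a w =
     (let A = 4 * a\<^sup>2; S = rect_city A w in
      (1 / A) * integral S (\<lambda>p. measure lebesgue (infeasible_set a p \<inter> S) / A))"

end

theory Submission
  imports Defs
begin

(* If p and q lie beyond the same end of the tram line, both walking legs run to that end
   point, which is not on the segment pq; the triangle inequality is then strict and q is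
   infeasible from p. If they lie beyond opposite ends and the city is no wider than the line
   is long, each walking leg is at most the overshoot along the line plus the distance to the
   axis, so the tram wins and q is feasible. A city of area 4a^2 and width w has half-length
   2a^2/w, so as w -> 0 almost all of it lies beyond one of the two ends: the infeasible
   fraction is then about 1/2 (a pair is infeasible roughly when both points are beyond the
   same end), and it is squeezed between (a - w)^2/(2a^2) and 1/2 + w/(2a) - w^2/(8a^2). *)

lemma d_tr_commute: "d_tr a p q = d_tr a q p"
  unfolding d_tr_def by (simp add: dist_commute add.commute)

lemma tram_proj_beyond_right: "0 \<le> a \<Longrightarrow> a \<le> fst p \<Longrightarrow> tram_proj a p = (a, 0)"
  by (simp add: tram_proj_def)

lemma tram_proj_beyond_left: "fst p \<le> - a \<Longrightarrow> tram_proj a p = (- a, 0)"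
  by (simp add: tram_proj_def)

lemma dist_less_d_tr_if_common_proj:
  assumes "tram_proj a p = e" "tram_proj a q = e" "e \<notin> closed_segment p q"
  shows "dist p q < d_tr a p q"
proof -
  have "dist p q \<noteq> dist p e + dist e q"
    using assms(3) by (simp add: between_mem_segment[symmetric] between)
  then show ?thesis
    using dist_triangle[of p q e] assms(1,2) by (simp add: d_tr_def)
qed

lemma dist_less_d_tr_beyond_right:
  assumes "0 \<le> a" "a < fst p" "a < fst q"
  shows "dist p q < d_tr a p q"
proof (rule dist_less_d_tr_if_common_proj)
  show "tram_proj a p = (a, 0)" "tram_proj a q = (a, 0)"
    using assms by (simp_all add: tram_proj_beyond_right)
  have "closed_segment p q \<subseteq> {a<..} \<times> UNIV"
    using assms by (intro closed_segment_subset convex_Times) (auto simp: mem_Times_iff)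
  then show "(a, 0) \<notin> closed_segment p q" by auto
qed

lemma dist_less_d_tr_beyond_left:
  assumes "fst p < - a" "fst q < - a"
  shows "dist p q < d_tr a p q"
proof (rule dist_less_d_tr_if_common_proj)
  show "tram_proj a p = (- a, 0)" "tram_proj a q = (- a, 0)"
    using assms by (simp_all add: tram_proj_beyond_left)
  have "closed_segment p q \<subseteq> {..< - a} \<times> UNIV"
    using assms by (intro closed_segment_subset convex_Times) (auto simp: mem_Times_iff)
  then show "(- a, 0) \<notin> closed_segment p q" by auto
qed

lemma d_tr_le_dist_opposite_ends:
  assumes "a \<le> fst p" "fst q \<le> - a" "\<bar>snd p\<bar> + \<bar>snd q\<bar> \<le> 2 * a"
  shows "d_tr a p q \<le> dist p q"
proof -
  obtain x1 y1 x2 y2 where pq: "p = (x1, y1)" "q = (x2, y2)" by fastforce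
  have "d_tr a p q = sqrt ((x1 - a)\<^sup>2 + y1\<^sup>2) + sqrt ((- a - x2)\<^sup>2 + y2\<^sup>2)"
    using assms by (simp add: pq d_tr_def tram_proj_beyond_right tram_proj_beyond_left dist_Pair_Pair
        dist_real_def power2_commute)
  also have "\<dots> \<le> (x1 - a) + \<bar>y1\<bar> + ((- a - x2) + \<bar>y2\<bar>)"
    using sqrt_sum_squares_le_sum_abs[of "x1 - a" y1] sqrt_sum_squares_le_sum_abs[of "- a - x2" y2]
      assms by (simp add: pq)
  also have "\<dots> \<le> dist (fst p) (fst q)"
    using assms by (simp add: pq dist_real_def)
  also have "\<dots> \<le> dist p q"
    by (rule dist_fst_le)
  finally show ?thesis .
qed

lemma continuous_on_tram_proj: "continuous_on UNIV (tram_proj a)"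
  unfolding tram_proj_def by (intro continuous_intros)

lemma continuous_on_d_tr: "continuous_on UNIV (\<lambda>z. d_tr a (fst z) (snd z))"
  unfolding d_tr_def
  by (intro continuous_intros continuous_on_compose2[OF continuous_on_tram_proj]) auto

definition infeasible_pairs ::
    "real \<Rightarrow> (real \<times> real) set \<Rightarrow> ((real \<times> real) \<times> (real \<times> real)) set"
  where "infeasible_pairs a S = {z. snd z \<in> S \<and> dist (fst z) (snd z) < d_tr a (fst z) (snd z)}"

lemma vimage_Pair_infeasible_pairs: "Pair p -` infeasible_pairs a S = infeasible_set a p \<inter> S"
  by (auto simp: infeasible_pairs_def infeasible_set_def)

lemma infeasible_pairs_in_sets:
  assumes "closed S"
  shows "infeasible_pairs a S \<in> sets (lborel \<Otimes>\<^sub>M lborel)"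
proof -
  have "infeasible_pairs a S =
      (UNIV \<times> S) \<inter> {z. dist (fst z) (snd z) < d_tr a (fst z) (snd z)}"
    by (auto simp: infeasible_pairs_def)
  also have "\<dots> \<in> sets borel"
  proof (rule sets.Int)
    show "UNIV \<times> S \<in> sets borel"
      using assms by (simp add: borel_closed closed_Times)
    show "{z. dist (fst z) (snd z) < d_tr a (fst z) (snd z)} \<in> sets borel"
      by (intro borel_open open_Collect_less continuous_intros continuous_on_d_tr)
  qed
  finally show ?thesis
    unfolding lborel_prod by simp
qed

definition infeasible_measure :: "real \<Rightarrow> (real \<times> real) set \<Rightarrow> real \<times> real \<Rightarrow> real"
  where "infeasible_measure a S p = measure lebesgue (infeasible_set a p \<inter> S)"

lemma infeasible_set_Int_in_sets: "closed S \<Longrightarrow> infeasible_set a p \<inter> S \<in> sets lborel"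
  using sets_Pair1[OF infeasible_pairs_in_sets] by (metis vimage_Pair_infeasible_pairs)

lemma borel_measurable_infeasible_measure:
  assumes "closed S"
  shows "infeasible_measure a S \<in> borel_measurable lborel"
proof -
  have "(\<lambda>p. emeasure lborel (Pair p -` infeasible_pairs a S)) \<in> borel_measurable lborel"
    using infeasible_pairs_in_sets[OF assms] by (rule lborel.measurable_emeasure_Pair)
  moreover have
    "infeasible_measure a S = (\<lambda>p. enn2real (emeasure lborel (Pair p -` infeasible_pairs a S)))"
    using infeasible_set_Int_in_sets[OF assms]
    by (simp add: fun_eq_iff infeasible_measure_def vimage_Pair_infeasible_pairs measure_def)
  ultimately show ?thesis
    by simp
qed

lemma infeasible_set_Int_cbox_lmeasurable: "infeasible_set a p \<inter> cbox u v \<in> lmeasurable"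
  using infeasible_set_Int_in_sets[OF closed_cbox]
  by (intro fmeasurableI2[OF lmeasurable_cbox Int_lower2]) auto

lemma infeasible_measure_nonneg: "0 \<le> infeasible_measure a S p"
  by (simp add: infeasible_measure_def)

lemma infeasible_measure_ge:
  assumes "T \<subseteq> infeasible_set a p \<inter> cbox u v" "T \<in> sets lebesgue"
  shows "measure lebesgue T \<le> infeasible_measure a (cbox u v) p"
  unfolding infeasible_measure_def
  using assms infeasible_set_Int_cbox_lmeasurable by (rule measure_mono_fmeasurable)

lemma infeasible_measure_le:
  assumes "infeasible_set a p \<inter> cbox u v \<subseteq> T" "T \<in> lmeasurable"
  shows "infeasible_measure a (cbox u v) p \<le> measure lebesgue T"
  unfolding infeasible_measure_def
  using assms infeasible_set_Int_cbox_lmeasurable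
  by (intro measure_mono_fmeasurable) auto

lemma integrable_infeasible_measure:
  "infeasible_measure a (cbox u v) integrable_on cbox u v"
proof (rule measurable_bounded_by_integrable_imp_integrable_real)
  show "infeasible_measure a (cbox u v) \<in> borel_measurable (lebesgue_on (cbox u v))"
    by (intro measurable_restrict_space1 measurable_completion borel_measurable_infeasible_measure
        closed_cbox)
  show "(\<lambda>p. measure lebesgue (cbox u v)) integrable_on cbox u v"
    by (rule integrable_const)
  show "\<bar>infeasible_measure a (cbox u v) p\<bar> \<le> measure lebesgue (cbox u v)" for p
    using infeasible_measure_le[of a p u v "cbox u v"] by (simp add: infeasible_measure_nonneg)
qed simp

lemma measure_cbox_Pair:
  fixes x0 x1 y0 y1 :: real
  assumes "x0 \<le> x1" "y0 \<le> y1"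
  shows "measure lborel (cbox (x0, y0) (x1, y1)) = (x1 - x0) * (y1 - y0)"
  using assms by (simp add: content_Pair)

lemma has_integral_indicator_cbox:
  assumes "cbox u v \<subseteq> S"
  shows "((\<lambda>p. if p \<in> cbox u v then c else 0) has_integral c * measure lborel (cbox u v)) S"
  using has_integral_const[of c u v] assms by (simp add: mult.commute)

lemma integral_infeasible_measure_ge:
  fixes L h :: real
  defines "S \<equiv> cbox (- L, - h) (L, h)"
  assumes a_nonneg: "0 \<le> a" and "a < t" "t \<le> L" "0 \<le> h"
  shows "8 * h\<^sup>2 * (L - t)\<^sup>2 \<le> integral S (infeasible_measure a S)"
proof -
  define R Q where "R = cbox (t, - h) (L, h)" and "Q = cbox (- L, - h) (- t, h)"
  define c where "c = 2 * h * (L - t)"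
  have measure_RQ: "measure lborel R = c" "measure lborel Q = c"
    using assms by (simp_all add: R_def Q_def c_def measure_cbox_Pair)
  have RQ_S: "R \<subseteq> S" "Q \<subseteq> S"
    using assms by (auto simp: R_def Q_def S_def cbox_Pair_eq)
  have R_right: "a < fst p" if "p \<in> R" for p
    using that assms by (auto simp: R_def cbox_Pair_eq mem_Times_iff)
  have "R \<subseteq> infeasible_set a p \<inter> S" if "p \<in> R" for p
    using that a_nonneg RQ_S R_right unfolding infeasible_set_def
    by (blast intro: dist_less_d_tr_beyond_right)
  then have R_le: "c \<le> infeasible_measure a S p" if "p \<in> R" for p
    using that infeasible_measure_ge[of R a p] measure_RQ by (simp add: S_def R_def)
  have Q_left: "fst p < - a" if "p \<in> Q" for p
    using that assms by (auto simp: Q_def cbox_Pair_eq mem_Times_iff)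
  have "Q \<subseteq> infeasible_set a p \<inter> S" if "p \<in> Q" for p
    using that RQ_S Q_left unfolding infeasible_set_def
    by (blast intro: dist_less_d_tr_beyond_left)
  then have Q_le: "c \<le> infeasible_measure a S p" if "p \<in> Q" for p
    using that infeasible_measure_ge[of Q a p] measure_RQ by (simp add: S_def Q_def)
  have "R \<inter> Q = {}"
    using assms by (auto simp: R_def Q_def cbox_Pair_eq)
  then have step_le:
    "(if p \<in> R then c else 0) + (if p \<in> Q then c else 0) \<le> infeasible_measure a S p" for p
    using R_le Q_le infeasible_measure_nonneg[of a S p] by auto
  have "((\<lambda>p. (if p \<in> R then c else 0) + (if p \<in> Q then c else 0)) has_integral c * c + c * c) S"
    using has_integral_add[OF has_integral_indicator_cbox[OF RQ_S(1)[unfolded R_def], of c]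
        has_integral_indicator_cbox[OF RQ_S(2)[unfolded Q_def], of c]] measure_RQ
    by (simp add: R_def Q_def)
  then have "c * c + c * c \<le> integral S (infeasible_measure a S)"
    using step_le integrable_infeasible_measure
    by (intro has_integral_le[OF _ integrable_integral]) (auto simp: S_def)
  then show ?thesis
    by (simp add: c_def power2_eq_square algebra_simps)
qed

lemma infeasible_set_Int_cbox_subset_right:
  fixes L h :: real
  assumes "h \<le> a" "a \<le> fst p" "\<bar>snd p\<bar> \<le> h"
  shows "infeasible_set a p \<inter> cbox (- L, - h) (L, h) \<subseteq> cbox (- a, - h) (L, h)"
proof
  fix q assume q: "q \<in> infeasible_set a p \<inter> cbox (- L, - h) (L, h)"
  then have "\<bar>snd q\<bar> \<le> h"
    by (auto simp: cbox_Pair_eq mem_Times_iff)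
  with q assms have "- a \<le> fst q"
    using d_tr_le_dist_opposite_ends[of a p q] by (force simp: infeasible_set_def)
  with q show "q \<in> cbox (- a, - h) (L, h)"
    by (auto simp: cbox_Pair_eq mem_Times_iff)
qed

lemma infeasible_set_Int_cbox_subset_left:
  fixes L h :: real
  assumes "h \<le> a" "fst p \<le> - a" "\<bar>snd p\<bar> \<le> h"
  shows "infeasible_set a p \<inter> cbox (- L, - h) (L, h) \<subseteq> cbox (- L, - h) (a, h)"
proof
  fix q assume q: "q \<in> infeasible_set a p \<inter> cbox (- L, - h) (L, h)"
  then have "\<bar>snd q\<bar> \<le> h"
    by (auto simp: cbox_Pair_eq mem_Times_iff)
  with q assms have "fst q \<le> a"
    using d_tr_le_dist_opposite_ends[of a q p]
    by (force simp: infeasible_set_def d_tr_commute dist_commute)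
  with q show "q \<in> cbox (- L, - h) (a, h)"
    by (auto simp: cbox_Pair_eq mem_Times_iff)
qed

lemma infeasible_measure_le_off_tram:
  fixes L h :: real
  defines "S \<equiv> cbox (- L, - h) (L, h)"
  assumes h_le: "h \<le> a" and "p \<in> S" "a \<le> \<bar>fst p\<bar>"
  shows "infeasible_measure a S p \<le> 2 * h * (L + a)"
proof -
  have p_bounds: "- L \<le> fst p" "fst p \<le> L" "\<bar>snd p\<bar> \<le> h" "0 \<le> h"
    using assms by (auto simp: cbox_Pair_eq mem_Times_iff)
  consider "a \<le> fst p" | "fst p \<le> - a"
    using assms by linarith
  then show ?thesis
  proof cases
    case 1
    then have "infeasible_measure a S p \<le> measure lborel (cbox (- a, - h) (L, h))"
      using infeasible_measure_le[OF infeasible_set_Int_cbox_subset_right lmeasurable_cbox]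
        assms p_bounds by (simp add: S_def)
    with 1 p_bounds h_le show ?thesis
      using measure_cbox_Pair[of "- a" L "- h" h] by (simp add: mult.commute)
  next
    case 2
    then have "infeasible_measure a S p \<le> measure lborel (cbox (- L, - h) (a, h))"
      using infeasible_measure_le[OF infeasible_set_Int_cbox_subset_left lmeasurable_cbox]
        assms p_bounds by (simp add: S_def)
    with 2 p_bounds h_le show ?thesis
      using measure_cbox_Pair[of "- L" a "- h" h] by (simp add: algebra_simps)
  qed
qed

lemma integral_infeasible_measure_le:
  fixes L h :: real
  defines "S \<equiv> cbox (- L, - h) (L, h)"
  assumes "0 \<le> h" "h \<le> a" "a \<le> L"
  shows "integral S (infeasible_measure a S) \<le> 8 * h\<^sup>2 * (L * (L + a) + a * (L - a))"
proof -
  define M where "M = cbox (- a, - h) (a, h)"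
  define c where "c = 2 * h * (L + a)"
  have measure_S: "measure lborel S = 4 * L * h"
    using assms by (simp add: S_def measure_cbox_Pair)
  have measure_M: "measure lborel M = 4 * a * h"
    using assms by (simp add: M_def measure_cbox_Pair)
  have M_S: "M \<subseteq> S"
    using assms by (auto simp: M_def S_def cbox_Pair_eq)
  have step_ge: "infeasible_measure a S p \<le> c + (if p \<in> M then 4 * L * h - c else 0)"
    if p_S: "p \<in> S" for p
  proof (cases "p \<in> M")
    case True
    then show ?thesis
      using infeasible_measure_le[of a p "(- L, - h)" "(L, h)" S] measure_S by (simp add: S_def)
  next
    case False
    with p_S have "a \<le> \<bar>fst p\<bar>"
      by (auto simp: M_def S_def cbox_Pair_eq mem_Times_iff)
    with False show ?thesis
      using infeasible_measure_le_off_tram[of h a p L] assms p_S by (simp add: S_def c_def)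
  qed
  have "((\<lambda>p. c + (if p \<in> M then 4 * L * h - c else 0)) has_integral
          c * (4 * L * h) + (4 * L * h - c) * (4 * a * h)) S"
    using has_integral_add[OF has_integral_const[of c "(- L, - h)" "(L, h)"]
        has_integral_indicator_cbox[OF M_S[unfolded M_def S_def], of "4 * L * h - c"]]
      measure_S measure_M by (simp add: S_def M_def mult.commute)
  then have "integral S (infeasible_measure a S) \<le> c * (4 * L * h) + (4 * L * h - c) * (4 * a * h)"
    using step_ge integrable_infeasible_measure
    by (intro has_integral_le[OF integrable_integral]) (auto simp: S_def)
  then show ?thesis
    by (simp add: c_def power2_eq_square algebra_simps)
qed

lemma rect_infeas_eq_integral:
  "rect_infeas a w =
     integral (rect_city (4 * a\<^sup>2) w) (infeasible_measure a (rect_city (4 * a\<^sup>2) w)) / (4 * a\<^sup>2)\<^sup>2"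
  by (simp add: rect_infeas_def infeasible_measure_def[abs_def] Let_def power2_eq_square)

lemma rect_infeas_bounds:
  assumes "0 < w" "w \<le> a"
  shows "(a - w)\<^sup>2 / (2 * a\<^sup>2) \<le> rect_infeas a w"
    and "rect_infeas a w \<le> 1 / 2 + w / (2 * a) - w\<^sup>2 / (8 * a\<^sup>2)"
proof -
  define L h where "L = 2 * a\<^sup>2 / w" and "h = w / 2"
  define S where "S = cbox (- L, - h) (L, h)"
  have a_pos: "0 < a"
    using assms by linarith
  have "2 * a \<le> L"
    using assms a_pos by (simp add: L_def field_simps power2_eq_square)
  have F: "rect_infeas a w = integral S (infeasible_measure a S) / (4 * a\<^sup>2)\<^sup>2"
    unfolding rect_infeas_eq_integral
    by (simp add: rect_city_def S_def L_def h_def cbox_Pair_eq power2_eq_square)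
  have "8 * h\<^sup>2 * (L - 2 * a)\<^sup>2 \<le> integral S (infeasible_measure a S)"
    unfolding S_def using assms \<open>2 * a \<le> L\<close> a_pos h_def
    by (intro integral_infeasible_measure_ge) auto
  moreover have "8 * h\<^sup>2 * (L - 2 * a)\<^sup>2 / (4 * a\<^sup>2)\<^sup>2 = (a - w)\<^sup>2 / (2 * a\<^sup>2)"
    using assms a_pos by (simp add: L_def h_def field_simps power2_eq_square)
  ultimately show "(a - w)\<^sup>2 / (2 * a\<^sup>2) \<le> rect_infeas a w"
    unfolding F by (metis divide_right_mono zero_le_power2)
  have "integral S (infeasible_measure a S) \<le> 8 * h\<^sup>2 * (L * (L + a) + a * (L - a))"
    unfolding S_def using assms \<open>2 * a \<le> L\<close> a_pos h_def
    by (intro integral_infeasible_measure_le) auto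
  moreover have "8 * h\<^sup>2 * (L * (L + a) + a * (L - a)) / (4 * a\<^sup>2)\<^sup>2
      = 1 / 2 + w / (2 * a) - w\<^sup>2 / (8 * a\<^sup>2)"
    using assms a_pos by (simp add: L_def h_def field_simps power2_eq_square)
  ultimately show "rect_infeas a w \<le> 1 / 2 + w / (2 * a) - w\<^sup>2 / (8 * a\<^sup>2)"
    unfolding F by (metis divide_right_mono zero_le_power2)
qed

theorem mainTheorem2:
  fixes a :: real
  assumes "a > 0"
  shows "(rect_infeas a \<longlongrightarrow> 1 / 2) (at_right 0)"
proof (rule tendsto_sandwich)
  have small: "\<forall>\<^sub>F w in at_right 0. 0 < w \<and> w \<le> a"
    using assms by (auto simp: eventually_at_right_field intro: exI[of _ a])
  show "\<forall>\<^sub>F w in at_right 0. (a - w)\<^sup>2 / (2 * a\<^sup>2) \<le> rect_infeas a w"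
    using small by eventually_elim (use rect_infeas_bounds in blast)
  show "\<forall>\<^sub>F w in at_right 0. rect_infeas a w \<le> 1 / 2 + w / (2 * a) - w\<^sup>2 / (8 * a\<^sup>2)"
    using small by eventually_elim (use rect_infeas_bounds in blast)
  have "((\<lambda>w. (a - w)\<^sup>2 / (2 * a\<^sup>2)) \<longlongrightarrow> (a - 0)\<^sup>2 / (2 * a\<^sup>2)) (at_right 0)"
    using assms by (intro tendsto_intros) auto
  then show "((\<lambda>w. (a - w)\<^sup>2 / (2 * a\<^sup>2)) \<longlongrightarrow> 1 / 2) (at_right 0)"
    using assms by (simp add: power2_eq_square)
  have "((\<lambda>w. 1 / 2 + w / (2 * a) - w\<^sup>2 / (8 * a\<^sup>2)) \<longlongrightarrow> 1 / 2 + 0 / (2 * a) - 0\<^sup>2 / (8 * a\<^sup>2))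
      (at_right 0)"
    using assms by (intro tendsto_intros) auto
  then show "((\<lambda>w. 1 / 2 + w / (2 * a) - w\<^sup>2 / (8 * a\<^sup>2)) \<longlongrightarrow> 1 / 2) (at_right 0)"
    by simp
qed

end
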